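(* Under the hypotheses of the sequential gradient descent setting (see context), for every $k\in\mathbb{N}$, $$J_{k+1}(x_{k+1})\le J_k(x_{k+1})\le J_k(x_k);$$ in particular the sequence $\{J_k(x_k)\}_k$ is nonincreasing.
   Context: $Q\in\mathbb{R}^{n\times n}$ symmetric positive semidefinite, $q\in\mathbb{R}^n$, $A\in\mathbb{R}^{n\times n}$ symmetric positive definite, $v\in\mathbb{R}^n$. $f(x)=\tfrac12 x^\top Qx+q^\top x$, $g(x)=(x-v)^\top A(x-v)$, $\mathcal{C}=\{x:g(x)\le1\}$, $\partial\mathcal{C}=\{x:g(x)=1\}$, $J_k(x)=f(x)+\frac{m}{k}g(x)^k$, $L_k=\bar\sigma(Q+m(4k-2)A)$, $r=\sqrt{\underline\sigma(A)}/\bar\sigma(A)$ ($\bar\sigma,\underline\sigma$ largest/smallest singular value). Setting: $m>0$ satisfies Requirement 2, namely with $w(x)=\nabla f(x)+m\nabla g(x)$, $\|w(x)\|^2\|\nabla g(x)\|\le 2rL_1\langle w(x),\nabla g(x)\rangle$ for all $x\in\partial\mathcal{C}$; $x_1\in\mathcal{C}$; $x_{k+1}=x_k-\gamma_k\nabla J_k(x_k)$ with $0<\gamma_k\le1/L_k$, $\sum_k\gamma_k^2<\infty$, $\sum_k\gamma_k=\infty$. *)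

theory Defs
  imports "HOL-Analysis.Analysis"
begin

definition grad :: "('a::euclidean_space \<Rightarrow> real) \<Rightarrow> 'a \<Rightarrow> 'a" where
  "grad F x = (THE D. (F has_derivative (\<lambda>h. D \<bullet> h)) (at x))"

definition sigma_max :: "real^'n^'n \<Rightarrow> real" where
  "sigma_max M = onorm (\<lambda>x. M *v x)"

definition sigma_min :: "real^'n^'n \<Rightarrow> real" where
  "sigma_min M = Inf {norm (M *v x) | x. norm x = 1}"

end

theory Submission
  imports Defs
begin

text \<open>
  The first inequality only needs \<open>g (x (k + 1)) \<le> 1\<close>: then \<open>0 \<le> g \<le> 1\<close> there, so
  \<open>g ^ (k + 1) \<le> g ^ k\<close>, and \<open>m / (k + 1) \<le> m / k\<close>. The second is the descent lemma for a
  gradient step of length at most \<open>1 / L k\<close>: on the convex set \<open>C\<close> the gradient of \<open>J k\<close>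
  satisfies the one-sided Lipschitz bound \<open>(a - b) \<bullet> (\<nabla>J k a - \<nabla>J k b) \<le> L k * \<parallel>a - b\<parallel>\<^sup>2\<close>,
  which reduces, via Cauchy-Schwarz for \<open>A\<close>, to a scalar inequality for the penalty term.

  Both therefore rest on the invariance of \<open>C\<close> under the gradient step \<open>T\<close>. On the boundary
  this is what Requirement 2 provides. If \<open>T\<close> took an interior point \<open>x\<close> out of \<open>C\<close>, let \<open>n\<close>
  be the outer normal at \<open>T x\<close> of the level set of \<open>g\<close> through \<open>T x\<close>, and \<open>z\<close> the point where
  the ray \<open>x + t n\<close> leaves \<open>C\<close>. The one-sided Lipschitz bound makes \<open>T\<close> monotone, so
  \<open>n \<bullet> T z \<ge> n \<bullet> T x\<close>; but \<open>T z \<in> C\<close> lies strictly on the other side of the tangent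
  hyperplane at \<open>T x\<close>.
\<close>

section \<open>Gradients, quadratic forms and singular values\<close>

lemma grad_eqI:
  fixes F :: "'a::euclidean_space \<Rightarrow> real"
  assumes "(F has_derivative (\<lambda>h. D \<bullet> h)) (at x)"
  shows "grad F x = D"
  unfolding grad_def
proof (rule the_equality)
  fix D' assume "(F has_derivative (\<lambda>h. D' \<bullet> h)) (at x)"
  then have "(\<lambda>h. D' \<bullet> h) = (\<lambda>h. D \<bullet> h)"
    using has_derivative_unique assms by blast
  then have "(D' - D) \<bullet> (D' - D) = 0"
    by (metis inner_diff_left diff_self)
  then show "D' = D" by simp
qed (rule assms)

lemma symmetric_matrix_inner_commute:
  fixes M :: "real^'n^'n"
  assumes "transpose M = M"
  shows "x \<bullet> (M *v y) = y \<bullet> (M *v x)"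
proof -
  have "x \<bullet> (M *v y) = (x v* M) \<bullet> y" by (simp add: dot_lmul_matrix)
  also have "x v* M = M *v x" using vector_transpose_matrix[of x M] assms by simp
  finally show ?thesis by (simp add: inner_commute)
qed

lemma has_derivative_quadratic_form:
  fixes M :: "real^'n^'n"
  assumes "transpose M = M"
  shows "((\<lambda>y. (y - v) \<bullet> (M *v (y - v))) has_derivative (\<lambda>h. (2 *\<^sub>R (M *v (y - v))) \<bullet> h)) (at y)"
proof -
  have "((\<lambda>y. (y - v) \<bullet> (M *v (y - v))) has_derivative
      (\<lambda>h. h \<bullet> (M *v (y - v)) + (y - v) \<bullet> (M *v h))) (at y)"
    by (auto intro!: derivative_eq_intros bounded_linear.has_derivative[OF matrix_vector_mul_bounded_linear])
  moreover have "(\<lambda>h. h \<bullet> (M *v (y - v)) + (y - v) \<bullet> (M *v h)) = (\<lambda>h. (2 *\<^sub>R (M *v (y - v))) \<bullet> h)"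
    using symmetric_matrix_inner_commute[OF assms, of "y - v"] by (intro ext) (simp add: inner_commute)
  ultimately show ?thesis by simp
qed

lemma psd_two_bilinear_le:
  fixes M :: "real^'n^'n"
  assumes "transpose M = M" "\<And>y. 0 \<le> y \<bullet> (M *v y)"
  shows "2 * (x \<bullet> (M *v y)) \<le> x \<bullet> (M *v x) + y \<bullet> (M *v y)"
proof -
  have "0 \<le> (x - y) \<bullet> (M *v (x - y))" by (rule assms(2))
  also have "\<dots> = x \<bullet> (M *v x) + y \<bullet> (M *v y) - x \<bullet> (M *v y) - y \<bullet> (M *v x)"
    by (simp add: matrix_vector_mult_diff_distrib inner_diff_left inner_diff_right)
  finally show ?thesis using symmetric_matrix_inner_commute[OF assms(1), of x y] by linarith
qed

lemma nonneg_quadratic_imp_discrim_le: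
  fixes a b c :: real
  assumes nonneg: "\<And>t. 0 \<le> a + 2*t*b + t\<^sup>2*c" and "0 \<le> c"
  shows "b\<^sup>2 \<le> a*c"
proof (cases "c = 0")
  case True
  have "b = 0"
  proof (rule ccontr)
    assume "b \<noteq> 0"
    then show False using nonneg[of "-(a+1)/(2*b)"] True by (simp add: field_simps)
  qed
  then show ?thesis using True by simp
next
  case False
  then have c: "c > 0" using assms by simp
  have "0 \<le> a + 2*(-b/c)*b + (-b/c)\<^sup>2*c" by (rule nonneg)
  also have "\<dots> = (a*c - b\<^sup>2)/c" using c by (simp add: field_simps power2_eq_square)
  finally show ?thesis using c by (simp add: zero_le_divide_iff)
qed

lemma psd_cauchy_schwarz:
  fixes M :: "real^'n^'n"
  assumes sym: "transpose M = M" and psd: "\<And>y. 0 \<le> y \<bullet> (M *v y)"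
  shows "(x \<bullet> (M *v y))\<^sup>2 \<le> (x \<bullet> (M *v x)) * (y \<bullet> (M *v y))"
proof (rule nonneg_quadratic_imp_discrim_le[OF _ psd])
  fix t :: real
  have "0 \<le> (x + t *\<^sub>R y) \<bullet> (M *v (x + t *\<^sub>R y))" by (rule psd)
  also have "\<dots> = x \<bullet> (M *v x) + t*(x \<bullet> (M *v y)) + t*(y \<bullet> (M *v x)) + t\<^sup>2*(y \<bullet> (M *v y))"
    by (simp add: power2_eq_square algebra_simps)
  finally show "0 \<le> x \<bullet> (M *v x) + 2*t*(x \<bullet> (M *v y)) + t\<^sup>2*(y \<bullet> (M *v y))"
    using symmetric_matrix_inner_commute[OF sym, of x y] by simp
qed

lemma norm_matrix_vector_le_sigma_max: "norm (M *v x) \<le> sigma_max M * norm x"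
  unfolding sigma_max_def using onorm[OF matrix_vector_mul_bounded_linear] by blast

lemma sigma_max_nonneg: "0 \<le> sigma_max M"
  unfolding sigma_max_def by (rule onorm_pos_le[OF matrix_vector_mul_bounded_linear])

lemma quadratic_form_le_sigma_max: "y \<bullet> (M *v y) \<le> sigma_max M * (norm y)\<^sup>2"
proof -
  have "y \<bullet> (M *v y) \<le> norm y * norm (M *v y)"
    using Cauchy_Schwarz_ineq2 abs_ge_self order_trans by blast
  also have "\<dots> \<le> norm y * (sigma_max M * norm y)"
    by (rule mult_left_mono[OF norm_matrix_vector_le_sigma_max]) simp
  finally show ?thesis by (simp add: power2_eq_square algebra_simps)
qed

lemma sigma_max_mono_psd:
  fixes M N :: "real^'n^'n"
  assumes sym: "transpose M = M" and psd: "\<And>y. 0 \<le> y \<bullet> (M *v y)"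
    and le: "\<And>y. y \<bullet> (M *v y) \<le> y \<bullet> (N *v y)"
  shows "sigma_max M \<le> sigma_max N"
proof -
  let ?s = "sigma_max M" and ?t = "sigma_max N"
  have "norm (M *v x) \<le> sqrt (?s * ?t) * norm x" for x
  proof -
    define u where "u = M *v x"
    have "((norm u)\<^sup>2)\<^sup>2 = (x \<bullet> (M *v u))\<^sup>2"
      using symmetric_matrix_inner_commute[OF sym, of x u] by (simp add: u_def power2_norm_eq_inner)
    also have "\<dots> \<le> (x \<bullet> (M *v x)) * (u \<bullet> (M *v u))"
      by (rule psd_cauchy_schwarz[OF sym psd])
    also have "\<dots> \<le> (?t * (norm x)\<^sup>2) * (?s * (norm u)\<^sup>2)"
      using le[of x] psd[of x] psd[of u] quadratic_form_le_sigma_max[of x N]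
        quadratic_form_le_sigma_max[of u M] sigma_max_nonneg[of N]
      by (intro mult_mono) auto
    finally have "(norm u)\<^sup>2 \<le> ?s * ?t * (norm x)\<^sup>2"
      using sigma_max_nonneg[of M] sigma_max_nonneg[of N]
      by (cases "norm u = 0") (auto simp: power2_eq_square algebra_simps)
    then have "sqrt ((norm u)\<^sup>2) \<le> sqrt (?s * ?t * (norm x)\<^sup>2)" by (rule real_sqrt_le_mono)
    then show ?thesis by (simp add: u_def real_sqrt_mult)
  qed
  then have "?s \<le> sqrt (?s * ?t)" unfolding sigma_max_def by (intro onorm_le) simp
  then have "?s\<^sup>2 \<le> ?s * ?t"
    using sigma_max_nonneg by (metis mult_nonneg_nonneg power_mono real_sqrt_pow2)
  then show ?thesis
    using sigma_max_nonneg[of M] sigma_max_nonneg[of N]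
    by (cases "?s = 0") (auto simp: power2_eq_square mult_le_cancel_left)
qed

lemma sigma_min_nonneg:
  fixes M :: "real^'n^'n"
  shows "0 \<le> sigma_min M"
proof -
  obtain e :: "real^'n" where "norm e = 1" using vector_choose_size[of 1] by auto
  then have "{norm (M *v x) | x. norm x = 1} \<noteq> {}" by auto
  then show ?thesis unfolding sigma_min_def by (rule cInf_greatest) auto
qed

lemma sigma_min_le_norm: "sigma_min M * norm d \<le> norm (M *v d)"
proof (cases "d = 0")
  case False
  have "sigma_min M \<le> norm (M *v ((1 / norm d) *\<^sub>R d))"
    unfolding sigma_min_def using False
    by (intro cInf_lower) (auto intro!: bdd_belowI[of _ 0])
  also have "\<dots> = norm (M *v d) / norm d" by (simp add: matrix_vector_mult_scaleR)
  finally show ?thesis using False by (simp add: pos_le_divide_eq)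
qed simp

lemma sqrt_sigma_min_le_norm:
  assumes "d \<bullet> (M *v d) = 1"
  shows "sqrt (sigma_min M) \<le> norm (M *v d)"
proof -
  have "1 \<le> norm d * norm (M *v d)"
    using norm_cauchy_schwarz[of d "M *v d"] assms by simp
  then have "sigma_min M \<le> sigma_min M * norm d * norm (M *v d)"
    using sigma_min_nonneg[of M] by (metis mult.assoc mult_left_mono mult.right_neutral)
  also have "\<dots> \<le> norm (M *v d) * norm (M *v d)"
    using sigma_min_le_norm[of M d] by (simp add: mult_right_mono)
  finally show ?thesis by (simp add: real_le_lsqrt power2_eq_square)
qed

section \<open>Scalar inequalities and a descent lemma\<close>

lemma power_diff_mult_diff_le:
  fixes a b :: real
  assumes "0 \<le> a" "a \<le> 1" "0 \<le> b" "b \<le> 1"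
  shows "(a^n - b^n) * (a - b) \<le> real n * (a - b)\<^sup>2"
proof -
  have "(a^n - b^n) * (a - b) = (\<Sum>i<n. b^(n - Suc i) * a^i) * (a - b)\<^sup>2"
    by (simp add: power_diff_sumr2 power2_eq_square)
  also have "(\<Sum>i<n. b^(n - Suc i) * a^i) \<le> (\<Sum>i<n. 1)"
    using assms by (intro sum_mono) (simp add: mult_le_one power_le_one)
  finally show ?thesis by (simp add: mult_right_mono)
qed

lemma mult_le_one_if_le_divide:
  fixes \<gamma> L :: real
  assumes "0 < \<gamma>" "\<gamma> \<le> 1 / L"
  shows "\<gamma> * L \<le> 1"
proof -
  have "0 < L" using assms by (smt (verit) zero_less_divide_1_iff)
  then show ?thesis using assms by (simp add: pos_le_divide_eq)
qed

text \<open>With \<open>\<alpha> = g a\<close>, \<open>\<beta> = g b\<close>, \<open>\<rho> = (a - v) \<bullet> A (b - v)\<close>, the left side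
  is \<open>(a - b) \<bullet> (\<nabla>P a - \<nabla>P b) / m\<close> for the penalty \<open>P = m / (j + 1) * g ^ (j + 1)\<close>, and
  the right side is \<open>(4 (j + 1) - 2) * ((a - b) \<bullet> A (a - b))\<close>: this is where the matrix
  in \<open>L (j + 1)\<close> comes from.\<close>

lemma penalty_gradient_gap_le:
  fixes \<alpha> \<beta> \<rho> :: real
  assumes "0 \<le> \<alpha>" "\<alpha> \<le> 1" "0 \<le> \<beta>" "\<beta> \<le> 1" and \<rho>: "\<rho>\<^sup>2 \<le> \<alpha> * \<beta>"
  shows "2 * (\<alpha>^j * (\<alpha> - \<rho>) - \<beta>^j * (\<rho> - \<beta>)) \<le> (4 * real j + 2) * (\<alpha> - 2 * \<rho> + \<beta>)"
proof -
  define a b where "a = sqrt \<alpha>" and "b = sqrt \<beta>"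
  have a: "0 \<le> a" "a \<le> 1" "\<alpha> = a\<^sup>2" and b: "0 \<le> b" "b \<le> 1" "\<beta> = b\<^sup>2"
    using assms by (auto simp: a_def b_def)
  have "\<rho> \<le> a * b"
    using real_le_rsqrt[of "\<bar>\<rho>\<bar>" "\<alpha> * \<beta>"] \<rho> by (simp add: a_def b_def real_sqrt_mult)
  moreover have "0 \<le> 8 * real j + 4 - 2 * (\<alpha>^j + \<beta>^j)"
    using assms power_le_one[of \<alpha> j] power_le_one[of \<beta> j] by simp
  ultimately have \<rho>_ab: "(8 * real j + 4 - 2 * (\<alpha>^j + \<beta>^j)) * \<rho> \<le> (8 * real j + 4 - 2 * (\<alpha>^j + \<beta>^j)) * (a * b)"
    by (rule mult_left_mono)
  have "(a^(2*j+1) - b^(2*j+1)) * (a - b) \<le> real (2*j+1) * (a - b)\<^sup>2"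
    using a(1,2) b(1,2) by (rule power_diff_mult_diff_le)
  moreover have "\<alpha>^j = a^(2*j)" "\<beta>^j = b^(2*j)"
    using a b by (simp_all add: power_mult)
  ultimately show ?thesis
    using \<rho>_ab a b by (simp add: power2_eq_square algebra_simps)
qed

lemma descent_step_le:
  fixes F :: "'a::real_inner \<Rightarrow> real" and G :: "'a \<Rightarrow> 'a"
  assumes S: "convex S" "x \<in> S" "x - \<gamma> *\<^sub>R G x \<in> S"
    and deriv: "\<And>y. y \<in> S \<Longrightarrow> (F has_derivative (\<lambda>h. G y \<bullet> h)) (at y)"
    and lip: "\<And>a b. a \<in> S \<Longrightarrow> b \<in> S \<Longrightarrow> (a - b) \<bullet> (G a - G b) \<le> L * (norm (a - b))\<^sup>2"
    and \<gamma>: "0 \<le> \<gamma>" "\<gamma> * L \<le> 1"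
  shows "F (x - \<gamma> *\<^sub>R G x) \<le> F x"
proof -
  define d where "d = - \<gamma> *\<^sub>R G x"
  have seg: "x + t *\<^sub>R d \<in> S" if "0 \<le> t" "t \<le> 1" for t
  proof -
    have "(1 - t) *\<^sub>R x + t *\<^sub>R (x - \<gamma> *\<^sub>R G x) \<in> S"
      using S that by (intro convexD) auto
    then show ?thesis by (simp add: d_def algebra_simps)
  qed
  \<comment> \<open>\<open>F\<close> along the step minus its quadratic upper model: nonincreasing on \<open>[0, 1]\<close>\<close>
  define \<phi> where "\<phi> t = F (x + t *\<^sub>R d) - t * (G x \<bullet> d) - L / 2 * t\<^sup>2 * (norm d)\<^sup>2" for t
  have "\<phi> 1 \<le> \<phi> 0"
  proof (rule DERIV_nonpos_imp_nonincreasing[of 0 1 \<phi>])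
    fix t :: real assume t: "0 \<le> t" "t \<le> 1"
    have "((\<lambda>t. x + t *\<^sub>R d) has_derivative (\<lambda>h. h *\<^sub>R d)) (at t)"
      by (auto intro!: derivative_eq_intros)
    from has_derivative_compose[OF this deriv[OF seg[OF t]]]
    have "((\<lambda>t. F (x + t *\<^sub>R d)) has_real_derivative G (x + t *\<^sub>R d) \<bullet> d) (at t)"
      by (simp add: has_field_derivative_def mult_commute_abs)
    then have "(\<phi> has_real_derivative G (x + t *\<^sub>R d) \<bullet> d - G x \<bullet> d - L * t * (norm d)\<^sup>2) (at t)"
      unfolding \<phi>_def[abs_def] by (auto intro!: derivative_eq_intros)
    moreover have "G (x + t *\<^sub>R d) \<bullet> d - G x \<bullet> d \<le> L * t * (norm d)\<^sup>2"
    proof (cases "t = 0")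
      case False
      have "t * (d \<bullet> (G (x + t *\<^sub>R d) - G x)) \<le> t * (L * t * (norm d)\<^sup>2)"
        using lip[OF seg[OF t] S(2)] by (simp add: power2_eq_square algebra_simps)
      then show ?thesis
        using False t by (simp add: inner_diff_right inner_commute)
    qed simp
    ultimately show "\<exists>y. (\<phi> has_real_derivative y) (at t) \<and> y \<le> 0" by fastforce
  qed simp
  moreover have "L / 2 * (\<gamma>\<^sup>2 * (norm (G x))\<^sup>2) \<le> \<gamma> * (norm (G x))\<^sup>2"
  proof -
    have nonneg: "0 \<le> \<gamma> * (norm (G x))\<^sup>2" using \<gamma>(1) by simp
    have "L / 2 * (\<gamma>\<^sup>2 * (norm (G x))\<^sup>2) = (\<gamma> * L) * (\<gamma> * (norm (G x))\<^sup>2) / 2"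
      by (simp add: power2_eq_square)
    also have "\<dots> \<le> \<gamma> * (norm (G x))\<^sup>2"
      using mult_right_mono[OF \<gamma>(2) nonneg] nonneg by simp
    finally show ?thesis .
  qed
  ultimately show ?thesis
    by (simp add: \<phi>_def d_def power2_norm_eq_inner power_mult_distrib)
qed

section \<open>The penalized quadratic program\<close>

locale ellipsoid_penalty =
  fixes Q A :: "real^'n^'n" and q v :: "real^'n" and m :: real
  assumes Q_sym: "transpose Q = Q" and Q_psd: "\<And>y. 0 \<le> y \<bullet> (Q *v y)"
    and A_sym: "transpose A = A" and A_pd: "\<And>y. y \<noteq> 0 \<Longrightarrow> 0 < y \<bullet> (A *v y)"
    and m_pos: "0 < m"
begin

definition f :: "real^'n \<Rightarrow> real" where
  "f y = (1/2) * (y \<bullet> (Q *v y)) + q \<bullet> y"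

definition g :: "real^'n \<Rightarrow> real" where
  "g y = (y - v) \<bullet> (A *v (y - v))"

definition J :: "nat \<Rightarrow> real^'n \<Rightarrow> real" where
  "J k y = f y + (m / real k) * (g y) ^ k"

definition L :: "nat \<Rightarrow> real" where
  "L k = sigma_max (Q + (m * (4 * real k - 2)) *\<^sub>R A)"

definition r :: real where
  "r = sqrt (sigma_min A) / sigma_max A"

text \<open>\<open>gradJ k\<close> is the gradient of \<open>J k\<close> only for \<open>k \<ge> 1\<close>: since \<open>m / 0 = 0\<close>, \<open>J 0 = f\<close>.\<close>

definition gradJ :: "nat \<Rightarrow> real^'n \<Rightarrow> real^'n" where
  "gradJ k y = Q *v y + q + (2 * m * g y ^ (k - 1)) *\<^sub>R (A *v (y - v))"

lemma A_psd: "0 \<le> y \<bullet> (A *v y)"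
  using A_pd[of y] by (cases "y = 0") auto

lemma g_nonneg: "0 \<le> g y"
  by (simp add: g_def A_psd)

lemma has_derivative_f: "(f has_derivative (\<lambda>h. (Q *v y + q) \<bullet> h)) (at y)"
proof -
  have "((\<lambda>y. y \<bullet> (Q *v y)) has_derivative (\<lambda>h. (2 *\<^sub>R (Q *v y)) \<bullet> h)) (at y)"
    using has_derivative_quadratic_form[OF Q_sym, of 0] by simp
  then have "(f has_derivative (\<lambda>h. (1/2) * ((2 *\<^sub>R (Q *v y)) \<bullet> h) + q \<bullet> h)) (at y)"
    unfolding f_def[abs_def] by (intro derivative_intros)
  then show ?thesis by (simp add: inner_add_left)
qed

lemma has_derivative_g: "(g has_derivative (\<lambda>h. (2 *\<^sub>R (A *v (y - v))) \<bullet> h)) (at y)"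
  unfolding g_def[abs_def] by (rule has_derivative_quadratic_form[OF A_sym])

lemma has_derivative_J:
  assumes "k \<ge> 1"
  shows "(J k has_derivative (\<lambda>h. gradJ k y \<bullet> h)) (at y)"
proof -
  have "(J k has_derivative (\<lambda>h. (Q *v y + q) \<bullet> h
      + (m / real k) * (real k * ((2 *\<^sub>R (A *v (y - v))) \<bullet> h) * g y ^ (k - 1)))) (at y)"
    unfolding J_def[abs_def]
    by (intro has_derivative_add has_derivative_f has_derivative_mult_right has_derivative_power has_derivative_g)
  then show ?thesis
    using assms by (simp add: gradJ_def algebra_simps)
qed

lemma grad_f: "grad f y = Q *v y + q"
  by (rule grad_eqI[OF has_derivative_f])

lemma grad_g: "grad g y = 2 *\<^sub>R (A *v (y - v))"
  by (rule grad_eqI[OF has_derivative_g])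

lemma grad_J: "k \<ge> 1 \<Longrightarrow> grad (J k) y = gradJ k y"
  by (rule grad_eqI[OF has_derivative_J])

lemma convex_sublevel_g: "convex {y. g y \<le> 1}"
proof (rule convexI, clarsimp)
  fix a b and s t :: real
  assume ab: "g a \<le> 1" "g b \<le> 1" and st: "0 \<le> s" "0 \<le> t" "s + t = 1"
  define p p' where "p = a - v" and "p' = b - v"
  have g_ab: "g a = p \<bullet> (A *v p)" "g b = p' \<bullet> (A *v p')"
    by (simp_all add: g_def p_def p'_def)
  have "g (s *\<^sub>R a + t *\<^sub>R b) = (s *\<^sub>R p + t *\<^sub>R p') \<bullet> (A *v (s *\<^sub>R p + t *\<^sub>R p'))"
    using st by (simp add: g_def p_def p'_def algebra_simps flip: scaleR_add_left)
  also have "\<dots> = s\<^sup>2 * g a + s * t * (2 * (p \<bullet> (A *v p'))) + t\<^sup>2 * g b"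
    using symmetric_matrix_inner_commute[OF A_sym, of p' p]
    by (simp add: g_ab power2_eq_square algebra_simps)
  also have "\<dots> \<le> s\<^sup>2 * g a + s * t * (g a + g b) + t\<^sup>2 * g b"
    using psd_two_bilinear_le[OF A_sym A_psd, of p p'] st
    by (simp add: g_ab mult_left_mono)
  also have "\<dots> = (s + t) * (s * g a + t * g b)"
    by (simp add: power2_eq_square algebra_simps)
  also have "\<dots> \<le> 1"
    using ab st convex_bound_le by simp
  finally show "g (s *\<^sub>R a + t *\<^sub>R b) \<le> 1" .
qed

lemma quadratic_form_Q_plus_A:
  "y \<bullet> ((Q + c *\<^sub>R A) *v y) = y \<bullet> (Q *v y) + c * (y \<bullet> (A *v y))"
  by (simp add: matrix_vector_mult_add_rdistrib scaleR_matrix_vector_assoc[symmetric] inner_add_right)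

lemma L_mono:
  assumes "1 \<le> k" "k \<le> l"
  shows "L k \<le> L l"
proof -
  define c c' where "c = m * (4 * real k - 2)" and "c' = m * (4 * real l - 2)"
  have c: "0 \<le> c" "c \<le> c'" using assms m_pos by (simp_all add: c_def c'_def)
  have "sigma_max (Q + c *\<^sub>R A) \<le> sigma_max (Q + c' *\<^sub>R A)"
  proof (rule sigma_max_mono_psd)
    have "transpose (Q + c *\<^sub>R A) = transpose Q + c *\<^sub>R transpose A"
      by (simp add: transpose_def vec_eq_iff)
    then show "transpose (Q + c *\<^sub>R A) = Q + c *\<^sub>R A" by (simp add: Q_sym A_sym)
    show "0 \<le> y \<bullet> ((Q + c *\<^sub>R A) *v y)" for y
      using Q_psd[of y] A_psd[of y] c by (simp add: quadratic_form_Q_plus_A)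
    show "y \<bullet> ((Q + c *\<^sub>R A) *v y) \<le> y \<bullet> ((Q + c' *\<^sub>R A) *v y)" for y
      using A_psd[of y] c by (simp add: quadratic_form_Q_plus_A mult_right_mono)
  qed
  then show ?thesis by (simp add: L_def c_def c'_def)
qed

lemma gradJ_one_sided_lipschitz:
  assumes "k \<ge> 1" "g a \<le> 1" "g b \<le> 1"
  shows "(a - b) \<bullet> (gradJ k a - gradJ k b) \<le> L k * (norm (a - b))\<^sup>2"
proof -
  obtain j where k: "k = Suc j" using assms(1) by (cases k) auto
  define p s d where "p = a - v" and "s = b - v" and "d = a - b"
  define \<alpha> \<beta> \<rho> where "\<alpha> = p \<bullet> (A *v p)" and "\<beta> = s \<bullet> (A *v s)" and "\<rho> = p \<bullet> (A *v s)"
  have g_ab: "g a = \<alpha>" "g b = \<beta>" by (simp_all add: \<alpha>_def \<beta>_def p_def s_def g_def)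
  have d_ps: "d = p - s" by (simp add: p_def s_def d_def)
  have \<rho>_sym: "s \<bullet> (A *v p) = \<rho>"
    using symmetric_matrix_inner_commute[OF A_sym, of s p] by (simp add: \<rho>_def)
  have "d \<bullet> (gradJ k a - gradJ k b)
      = d \<bullet> (Q *v d) + m * (2 * (\<alpha>^j * (d \<bullet> (A *v p)) - \<beta>^j * (d \<bullet> (A *v s))))"
    by (simp add: gradJ_def g_ab k d_def p_def s_def algebra_simps)
  also have "\<dots> = d \<bullet> (Q *v d) + m * (2 * (\<alpha>^j * (\<alpha> - \<rho>) - \<beta>^j * (\<rho> - \<beta>)))"
    by (simp add: d_ps inner_diff_left \<alpha>_def \<beta>_def \<rho>_def \<rho>_sym)
  also have "\<dots> \<le> d \<bullet> (Q *v d) + m * ((4 * real j + 2) * (\<alpha> - 2 * \<rho> + \<beta>))"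
  proof -
    have "\<rho>\<^sup>2 \<le> \<alpha> * \<beta>"
      unfolding \<rho>_def \<alpha>_def \<beta>_def by (rule psd_cauchy_schwarz[OF A_sym A_psd])
    then have "2 * (\<alpha>^j * (\<alpha> - \<rho>) - \<beta>^j * (\<rho> - \<beta>)) \<le> (4 * real j + 2) * (\<alpha> - 2 * \<rho> + \<beta>)"
      using assms g_ab g_nonneg[of a] g_nonneg[of b] by (intro penalty_gradient_gap_le) auto
    then show ?thesis using m_pos by simp
  qed
  also have "\<dots> = d \<bullet> ((Q + (m * (4 * real k - 2)) *\<^sub>R A) *v d)"
  proof -
    have dAd: "d \<bullet> (A *v d) = \<alpha> - 2 * \<rho> + \<beta>"
      using \<rho>_sym by (simp add: d_ps inner_diff_left inner_diff_right matrix_vector_mult_diff_distrib \<alpha>_def \<beta>_def \<rho>_def)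
    show ?thesis unfolding quadratic_form_Q_plus_A dAd by (simp add: k algebra_simps)
  qed
  also have "\<dots> \<le> L k * (norm d)\<^sup>2"
    unfolding L_def by (rule quadratic_form_le_sigma_max)
  finally show ?thesis by (simp add: d_def)
qed

lemma gradient_step_monotone:
  assumes "k \<ge> 1" "g a \<le> 1" "g b \<le> 1" "0 \<le> \<gamma>" "\<gamma> * L k \<le> 1"
  shows "0 \<le> (a - b) \<bullet> ((a - \<gamma> *\<^sub>R gradJ k a) - (b - \<gamma> *\<^sub>R gradJ k b))"
proof -
  have "\<gamma> * ((a - b) \<bullet> (gradJ k a - gradJ k b)) \<le> \<gamma> * (L k * (norm (a - b))\<^sup>2)"
    using gradJ_one_sided_lipschitz[OF assms(1-3)] assms(4) by (rule mult_left_mono)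
  also have "\<dots> \<le> (norm (a - b))\<^sup>2"
    using mult_right_mono[OF assms(5), of "(norm (a - b))\<^sup>2"] by (simp add: mult.assoc)
  finally show ?thesis
    by (simp add: power2_norm_eq_inner algebra_simps)
qed

lemma sigma_max_A_pos: "0 < sigma_max A"
proof -
  obtain e :: "real^'n" where e: "norm e = 1" using vector_choose_size[of 1] by auto
  then have "0 < e \<bullet> (A *v e)" by (intro A_pd) auto
  also have "\<dots> \<le> sigma_max A" using quadratic_form_le_sigma_max[of e A] e by simp
  finally show ?thesis .
qed

lemma sublevel_halfspace_less:
  assumes "g w \<le> 1" "1 < g y"
  shows "(w - v) \<bullet> (A *v (y - v)) < g y"
  using psd_two_bilinear_le[OF A_sym A_psd, of "w - v" "y - v"] assms by (simp add: g_def)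

lemma sublevel_ray_meets_boundary:
  assumes x: "g x \<le> 1" and n: "n \<noteq> 0"
  obtains t where "0 \<le> t" "g (x + t *\<^sub>R n) = 1"
proof -
  define p where "p = x - v"
  define c1 c2 where "c1 = 2 * (n \<bullet> (A *v p))" and "c2 = n \<bullet> (A *v n)"
  have c2: "0 < c2" using A_pd[OF n] by (simp add: c2_def)
  have expand: "g (x + t *\<^sub>R n) = g x + t * c1 + t\<^sup>2 * c2" for t
  proof -
    have "g (x + t *\<^sub>R n) = (p + t *\<^sub>R n) \<bullet> (A *v (p + t *\<^sub>R n))"
      by (simp add: g_def p_def algebra_simps)
    moreover have "g x = p \<bullet> (A *v p)" by (simp add: g_def p_def)
    ultimately show ?thesis
      using symmetric_matrix_inner_commute[OF A_sym, of p n]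
      by (simp add: c1_def c2_def power2_eq_square algebra_simps)
  qed
  define t0 where "t0 = (\<bar>c1\<bar> + 1) / c2 + 1"
  have t0: "1 \<le> t0" "\<bar>c1\<bar> + 1 \<le> t0 * c2"
    using c2 by (simp_all add: t0_def field_simps)
  have "1 \<le> c1 + t0 * c2" using t0(2) abs_ge_minus_self[of c1] by linarith
  then have "1 \<le> t0 * (c1 + t0 * c2)" using t0(1) mult_mono[of 1 t0 1 "c1 + t0 * c2"] by simp
  then have "1 \<le> g (x + t0 *\<^sub>R n)"
    using g_nonneg[of x] by (simp add: expand power2_eq_square algebra_simps)
  moreover have "continuous_on {0..t0} (\<lambda>t. g (x + t *\<^sub>R n))"
    unfolding expand by (intro continuous_intros)
  ultimately obtain t where "0 \<le> t" "g (x + t *\<^sub>R n) = 1"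
    using IVT'[of "\<lambda>t. g (x + t *\<^sub>R n)" 0 1 t0] x t0 by auto
  then show ?thesis by (rule that)
qed

lemma requirement2_curvature_bound:
  fixes z :: "real^'n"
  defines "w \<equiv> grad f z + m *\<^sub>R grad g z"
  assumes z: "g z = 1"
    and req: "(norm w)\<^sup>2 * norm (grad g z) \<le> 2 * r * L 1 * (w \<bullet> grad g z)"
  shows "0 \<le> w \<bullet> grad g z" and "sigma_max A * (norm w)\<^sup>2 \<le> L 1 * (w \<bullet> grad g z)"
proof -
  define d P where "d = z - v" and "P = w \<bullet> grad g z"
  have dAd: "d \<bullet> (A *v d) = 1" using z by (simp add: g_def d_def)
  have grad_g_z: "grad g z = 2 *\<^sub>R (A *v d)" by (simp add: grad_g d_def)
  have "0 \<le> P \<and> sigma_max A * (norm w)\<^sup>2 \<le> L 1 * P"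
  proof (cases "w = 0")
    case False
    have "A *v d \<noteq> 0" using dAd by auto
    then have "0 < (norm w)\<^sup>2 * norm (grad g z)" using False by (simp add: grad_g_z)
    then have "0 < 2 * r * L 1 * P" using req by (simp add: P_def)
    then have "0 < r * (L 1 * P)" by (metis mult.assoc zero_less_mult_pos zero_less_numeral)
    moreover have "0 \<le> r" "0 \<le> L 1"
      using sigma_min_nonneg[of A] sigma_max_A_pos sigma_max_nonneg by (simp_all add: r_def L_def)
    ultimately have r: "0 < r" and P: "0 < P"
      by (auto simp: zero_less_mult_iff)
    have "r * (sigma_max A * (norm w)\<^sup>2) = (norm w)\<^sup>2 * sqrt (sigma_min A)"
      using sigma_max_A_pos by (simp add: r_def)
    also have "\<dots> \<le> (norm w)\<^sup>2 * norm (A *v d)"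
      using sqrt_sigma_min_le_norm[OF dAd] by (simp add: mult_left_mono)
    also have "\<dots> \<le> r * (L 1 * P)" using req by (simp add: grad_g_z P_def ac_simps)
    finally show ?thesis using r P by simp
  qed (simp add: P_def)
  then show "0 \<le> w \<bullet> grad g z" and "sigma_max A * (norm w)\<^sup>2 \<le> L 1 * (w \<bullet> grad g z)"
    by (simp_all add: P_def)
qed

lemma g_boundary_step_le_one:
  assumes k: "k \<ge> 1" and z: "g z = 1" and \<gamma>: "0 \<le> \<gamma>" "\<gamma> * L k \<le> 1"
    and req: "(norm (grad f z + m *\<^sub>R grad g z))\<^sup>2 * norm (grad g z)
      \<le> 2 * r * L 1 * ((grad f z + m *\<^sub>R grad g z) \<bullet> grad g z)"
  shows "g (z - \<gamma> *\<^sub>R gradJ k z) \<le> 1"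
proof -
  define d w where "d = z - v" and "w = gradJ k z"
  define P where "P = w \<bullet> grad g z"
  have "w = grad f z + m *\<^sub>R grad g z" by (simp add: w_def gradJ_def grad_f grad_g z)
  then have P: "0 \<le> P" "sigma_max A * (norm w)\<^sup>2 \<le> L 1 * P"
    using requirement2_curvature_bound[OF z req] by (simp_all add: P_def)
  have d: "g z = d \<bullet> (A *v d)" "grad g z = 2 *\<^sub>R (A *v d)"
    by (simp_all add: g_def grad_g d_def)
  have "g (z - \<gamma> *\<^sub>R w) = (d - \<gamma> *\<^sub>R w) \<bullet> (A *v (d - \<gamma> *\<^sub>R w))"
    by (simp add: g_def d_def algebra_simps)
  also have "\<dots> = g z - \<gamma> * P + \<gamma>\<^sup>2 * (w \<bullet> (A *v w))"
    using symmetric_matrix_inner_commute[OF A_sym, of d w]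
    by (simp add: P_def d power2_eq_square algebra_simps)
  also have "\<dots> \<le> 1"
  proof -
    have "\<gamma> * (w \<bullet> (A *v w)) \<le> \<gamma> * (L k * P)"
      using quadratic_form_le_sigma_max[of w A] L_mono[OF order_refl k] P \<gamma>(1)
      by (smt (verit) mult_left_mono mult_right_mono)
    also have "\<dots> \<le> P" using mult_right_mono[OF \<gamma>(2) P(1)] by (simp add: mult.assoc)
    finally have "\<gamma>\<^sup>2 * (w \<bullet> (A *v w)) \<le> \<gamma> * P"
      using \<gamma>(1) mult_left_mono by (fastforce simp: power2_eq_square mult.assoc)
    then show ?thesis using z by simp
  qed
  finally show ?thesis by (simp add: w_def)
qed

lemma g_step_le_one:
  assumes k: "k \<ge> 1" and x: "g x \<le> 1" and \<gamma>: "0 \<le> \<gamma>" "\<gamma> * L k \<le> 1"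
    and req: "\<And>y. g y = 1 \<Longrightarrow> (norm (grad f y + m *\<^sub>R grad g y))\<^sup>2 * norm (grad g y)
      \<le> 2 * r * L 1 * ((grad f y + m *\<^sub>R grad g y) \<bullet> grad g y)"
  shows "g (x - \<gamma> *\<^sub>R gradJ k x) \<le> 1"
proof (rule ccontr)
  define T where "T y = y - \<gamma> *\<^sub>R gradJ k y" for y
  assume "\<not> g (x - \<gamma> *\<^sub>R gradJ k x) \<le> 1"
  then have out: "1 < g (T x)" by (simp add: T_def)
  define n where "n = A *v (T x - v)"
  have "n \<noteq> 0" using out by (auto simp: n_def g_def)
  then obtain t where t: "0 \<le> t" and boundary: "g (x + t *\<^sub>R n) = 1"
    using sublevel_ray_meets_boundary[OF x] by blast
  define z where "z = x + t *\<^sub>R n"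
  have Tz: "g (T z) \<le> 1"
    using g_boundary_step_le_one[OF k _ \<gamma> req] boundary by (simp add: T_def z_def)
  have "0 \<le> t * (n \<bullet> (T z - T x))"
    using gradient_step_monotone[OF k _ x \<gamma>, of z] boundary by (simp add: T_def z_def)
  then have "n \<bullet> T x \<le> n \<bullet> T z"
    using t by (cases "t = 0") (auto simp: z_def zero_le_mult_iff inner_diff_right)
  moreover have "(T z - v) \<bullet> n < (T x - v) \<bullet> n"
    using sublevel_halfspace_less[OF Tz out] by (simp add: n_def g_def)
  ultimately show False
    using inner_diff_left[of "T z" v n] inner_diff_left[of "T x" v n]
      inner_commute[of n "T x"] inner_commute[of n "T z"] by linarith
qed

lemma J_step_le:
  assumes "k \<ge> 1" "g x \<le> 1" "g (x - \<gamma> *\<^sub>R gradJ k x) \<le> 1" "0 \<le> \<gamma>" "\<gamma> * L k \<le> 1"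
  shows "J k (x - \<gamma> *\<^sub>R gradJ k x) \<le> J k x"
  using assms
  by (intro descent_step_le[OF convex_sublevel_g, where L = "L k"])
    (auto intro: has_derivative_J gradJ_one_sided_lipschitz)

lemma J_Suc_le:
  assumes "k \<ge> 1" "g y \<le> 1"
  shows "J (Suc k) y \<le> J k y"
proof -
  have "g y ^ Suc k \<le> g y ^ k"
    using g_nonneg[of y] assms(2) by (simp add: mult_left_le_one_le)
  moreover have "m / real (Suc k) \<le> m / real k"
    using m_pos assms(1) by (intro divide_left_mono) auto
  ultimately have "m / real (Suc k) * g y ^ Suc k \<le> m / real k * g y ^ k"
    using m_pos g_nonneg[of y] by (intro mult_mono) auto
  then show ?thesis by (simp add: J_def)
qed

end

theorem lemma4:
  fixes Q A :: "real^'n^'n" and q v :: "real^'n" and m :: real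
    and f g :: "real^'n \<Rightarrow> real" and J :: "nat \<Rightarrow> real^'n \<Rightarrow> real"
    and L :: "nat \<Rightarrow> real" and r :: real
    and x :: "nat \<Rightarrow> real^'n" and \<gamma> :: "nat \<Rightarrow> real"
  assumes Q_sym: "transpose Q = Q"
    and Q_psd: "\<forall>y. y \<bullet> (Q *v y) \<ge> 0"
    and A_sym: "transpose A = A"
    and A_pd: "\<forall>y. y \<noteq> 0 \<longrightarrow> y \<bullet> (A *v y) > 0"
    and f_def: "\<forall>y. f y = (1/2) * (y \<bullet> (Q *v y)) + q \<bullet> y"
    and g_def: "\<forall>y. g y = (y - v) \<bullet> (A *v (y - v))"
    and J_def: "\<forall>k y. J k y = f y + (m / real k) * (g y) ^ k"
    and L_def: "\<forall>k. L k = sigma_max (Q + (m * (4 * real k - 2)) *\<^sub>R A)"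
    and r_def: "r = sqrt (sigma_min A) / sigma_max A"
    and m_pos: "m > 0"
    and req2: "\<forall>y. g y = 1 \<longrightarrow>
        (norm (grad f y + m *\<^sub>R grad g y))\<^sup>2 * norm (grad g y)
          \<le> 2 * r * L 1 * ((grad f y + m *\<^sub>R grad g y) \<bullet> grad g y)"
    and x1: "g (x 1) \<le> 1"
    and iter: "\<forall>k\<ge>1. x (k + 1) = x k - \<gamma> k *\<^sub>R grad (J k) (x k)"
    and step: "\<forall>k\<ge>1. 0 < \<gamma> k \<and> \<gamma> k \<le> 1 / L k"
    and sq_sum: "summable (\<lambda>k. (\<gamma> k)\<^sup>2)"
    and div_sum: "filterlim (\<lambda>n. \<Sum>k=1..n. \<gamma> k) at_top sequentially"
  shows "\<forall>k\<ge>1. J (k + 1) (x (k + 1)) \<le> J k (x (k + 1))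
                 \<and> J k (x (k + 1)) \<le> J k (x k)"
proof -
  \<comment> \<open>\<open>sq_sum\<close> and \<open>div_sum\<close> are needed only for convergence of the method, not here.\<close>
  interpret P: ellipsoid_penalty Q A q v m
    using Q_sym Q_psd A_sym A_pd m_pos by unfold_locales auto
  have f_eq: "f = P.f" using f_def by (auto simp: P.f_def)
  have g_eq: "g = P.g" using g_def by (auto simp: P.g_def)
  have J_eq: "J = P.J" using J_def by (intro ext) (simp add: P.J_def f_eq g_eq)
  have L_eq: "L = P.L" using L_def by (auto simp: P.L_def)
  have r_eq: "r = P.r" by (simp add: r_def P.r_def)
  have step_size: "0 \<le> \<gamma> k" "\<gamma> k * P.L k \<le> 1" if "k \<ge> 1" for k
    using step that mult_le_one_if_le_divide by (auto simp: L_eq less_imp_le)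
  have x_next: "x (k + 1) = x k - \<gamma> k *\<^sub>R P.gradJ k (x k)" if "k \<ge> 1" for k
    using iter that by (simp add: J_eq P.grad_J)
  have x_in: "P.g (x k) \<le> 1" if "k \<ge> 1" for k
    using that
  proof (induction k rule: nat_induct_at_least)
    case (Suc k)
    show ?case
      using P.g_step_le_one[OF Suc.hyps Suc.IH step_size[OF Suc.hyps]] req2 x_next[OF Suc.hyps]
      by (simp add: f_eq g_eq r_eq L_eq)
  qed (use x1 g_eq in simp)
  show ?thesis
  proof (intro allI impI conjI)
    fix k :: nat assume k: "k \<ge> 1"
    have next_in: "P.g (x (k + 1)) \<le> 1" using x_in k by simp
    show "J (k + 1) (x (k + 1)) \<le> J k (x (k + 1))"
      using P.J_Suc_le[OF k next_in] by (simp add: J_eq)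
    show "J k (x (k + 1)) \<le> J k (x k)"
      using P.J_step_le[OF k x_in[OF k] _ step_size[OF k]] next_in x_next[OF k] by (simp add: J_eq)
  qed
qed

end
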